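(* Let $k$ be a field, $(X,\leq)$ a locally finite preordered set and $C=IC(X)$. Then every indecomposable injective right $C$-comodule is isomorphic to $E_x$ for some $x\in X$.
   Context: $(X,\leq)$ is a reflexive transitive relation with all intervals $[x,y]$ finite. $IC(X)$ has $k$-basis $\{e_{x,y}\mid x\leq y\}$, $\Delta(e_{x,y})=\sum_{x\leq z\leq y}e_{x,z}\otimes e_{z,y}$, $\varepsilon(e_{x,y})=\delta_{x,y}$. For $x\in X$, $E_x=\operatorname{span}\{e_{x,y}\mid y\in X,\ x\leq y\}$, a right $C$-subcomodule of $C$. *)

theory Defs
  imports Complex_Main "HOL-Library.Function_Algebras"
begin

text \<open>
  Incidence coalgebra C = IC(X) of a preorder X (the type 'x, order from class preorder).
  C has k-basis e_(a,b) for a \<le> b. A right C-comodule M is a k-subspace V of a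
  k-vector space (type 'm with scalar multiplication sc) together with a coaction
  rho : M \<rightarrow> M \<otimes> C. Since C has the basis e_(a,b), an element of M \<otimes> C is uniquely
  a finite sum  sum_(a\<le>b) m_(a,b) \<otimes> e_(a,b); we encode rho by the coefficient map
  rho m (a,b) = m_(a,b). Coassociativity and counitality are written out on this basis.
\<close>

definition is_comodule ::
  "('k::field \<Rightarrow> 'm::ab_group_add \<Rightarrow> 'm) \<Rightarrow> 'm set \<Rightarrow> ('m \<Rightarrow> 'x::preorder \<times> 'x \<Rightarrow> 'm) \<Rightarrow> bool" where
  "is_comodule sc V \<rho> \<longleftrightarrow>
     0 \<in> V \<and> (\<forall>m\<in>V. \<forall>n\<in>V. m + n \<in> V) \<and> (\<forall>c. \<forall>m\<in>V. sc c m \<in> V)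
   \<and> (\<forall>m\<in>V. \<forall>p. \<rho> m p \<in> V)
   \<and> (\<forall>m\<in>V. finite {p. \<rho> m p \<noteq> 0})
   \<and> (\<forall>m\<in>V. \<forall>a b. \<not> a \<le> b \<longrightarrow> \<rho> m (a, b) = 0)
   \<and> (\<forall>m\<in>V. \<forall>n\<in>V. \<forall>p. \<rho> (m + n) p = \<rho> m p + \<rho> n p)
   \<and> (\<forall>c. \<forall>m\<in>V. \<forall>p. \<rho> (sc c m) p = sc c (\<rho> m p))
   \<and> (\<forall>m\<in>V. \<forall>a b c d. a \<le> b \<longrightarrow> c \<le> d \<longrightarrow>
          \<rho> (\<rho> m (c, d)) (a, b) = (if b = c then \<rho> m (a, d) else 0))
   \<and> (\<forall>m\<in>V. m = (\<Sum>x\<in>{x. \<rho> m (x, x) \<noteq> 0}. \<rho> m (x, x)))"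

definition comod_hom ::
  "('k::field \<Rightarrow> 'm::ab_group_add \<Rightarrow> 'm) \<Rightarrow> 'm set \<Rightarrow> ('m \<Rightarrow> 'x::preorder \<times> 'x \<Rightarrow> 'm) \<Rightarrow>
   ('k \<Rightarrow> 'n::ab_group_add \<Rightarrow> 'n) \<Rightarrow> 'n set \<Rightarrow> ('n \<Rightarrow> 'x \<times> 'x \<Rightarrow> 'n) \<Rightarrow> ('m \<Rightarrow> 'n) \<Rightarrow> bool" where
  "comod_hom sc1 V \<rho> sc2 W \<sigma> f \<longleftrightarrow>
     (\<forall>m\<in>V. f m \<in> W)
   \<and> (\<forall>m\<in>V. \<forall>n\<in>V. f (m + n) = f m + f n)
   \<and> (\<forall>c. \<forall>m\<in>V. f (sc1 c m) = sc2 c (f m))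
   \<and> (\<forall>m\<in>V. \<forall>p. \<sigma> (f m) p = f (\<rho> m p))"

definition comod_iso ::
  "('k::field \<Rightarrow> 'm::ab_group_add \<Rightarrow> 'm) \<Rightarrow> 'm set \<Rightarrow> ('m \<Rightarrow> 'x::preorder \<times> 'x \<Rightarrow> 'm) \<Rightarrow>
   ('k \<Rightarrow> 'n::ab_group_add \<Rightarrow> 'n) \<Rightarrow> 'n set \<Rightarrow> ('n \<Rightarrow> 'x \<times> 'x \<Rightarrow> 'n) \<Rightarrow> bool" where
  "comod_iso sc1 V \<rho> sc2 W \<sigma> \<longleftrightarrow>
     (\<exists>f. comod_hom sc1 V \<rho> sc2 W \<sigma> f \<and> bij_betw f V W)"

definition pscale :: "'k::field \<Rightarrow> ('i \<Rightarrow> 'k) \<Rightarrow> ('i \<Rightarrow> 'k)" where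
  "pscale c v = (\<lambda>i. c * v i)"

definition injective_comodule ::
  "('k::field \<Rightarrow> 'm::ab_group_add \<Rightarrow> 'm) \<Rightarrow> 'm set \<Rightarrow> ('m \<Rightarrow> 'x::preorder \<times> 'x \<Rightarrow> 'm) \<Rightarrow> bool" where
  "injective_comodule sc V \<rho> \<longleftrightarrow>
     (\<forall>(N :: (nat \<Rightarrow> 'k) set) \<rho>N (P :: (nat \<Rightarrow> 'k) set) \<rho>P f g.
        is_comodule pscale N \<rho>N \<and> is_comodule pscale P \<rho>P
        \<and> comod_hom pscale N \<rho>N pscale P \<rho>P f \<and> inj_on f N
        \<and> comod_hom pscale N \<rho>N sc V \<rho> g
        \<longrightarrow> (\<exists>h. comod_hom pscale P \<rho>P sc V \<rho> h \<and> (\<forall>n\<in>N. h (f n) = g n)))"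

definition indecomposable_comodule ::
  "('k::field \<Rightarrow> 'm::ab_group_add \<Rightarrow> 'm) \<Rightarrow> 'm set \<Rightarrow> ('m \<Rightarrow> 'x::preorder \<times> 'x \<Rightarrow> 'm) \<Rightarrow> bool" where
  "indecomposable_comodule sc V \<rho> \<longleftrightarrow>
     V \<noteq> {0} \<and>
     (\<forall>A B. A \<subseteq> V \<and> B \<subseteq> V \<and> is_comodule sc A \<rho> \<and> is_comodule sc B \<rho>
        \<and> A \<inter> B = {0} \<and> (\<forall>m\<in>V. \<exists>a\<in>A. \<exists>b\<in>B. m = a + b)
        \<longrightarrow> A = {0} \<or> B = {0})"

text \<open>Elements of C = IC(X) as finitely supported coefficient functions on pairs (a,b), a \<le> b;
  the right C-comodule structure of C (given by the comultiplication) in coefficient form: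
  Delta(v) = sum_(a\<le>b) rho v (a,b) \<otimes> e_(a,b).\<close>
definition inc_coact :: "('x::preorder \<times> 'x \<Rightarrow> 'k::zero) \<Rightarrow> 'x \<times> 'x \<Rightarrow> ('x \<times> 'x \<Rightarrow> 'k)" where
  "inc_coact v = (\<lambda>(a, b). if a \<le> b then (\<lambda>(p, z). if z = a \<and> p \<le> a then v (p, b) else 0)
                           else (\<lambda>_. 0))"

definition Ex :: "'x::preorder \<Rightarrow> ('x \<times> 'x \<Rightarrow> 'k::zero) set" where
  "Ex x = {v. finite {p. v p \<noteq> 0} \<and> (\<forall>p q. v (p, q) \<noteq> 0 \<longrightarrow> p = x \<and> x \<le> q)}"

end

theory Submission
  imports Defs
begin

text \<open>
  Pick \<open>m \<noteq> 0\<close> in \<open>V\<close> and a row index \<open>x\<close> minimal among those \<open>a\<close> with \<open>\<rho> m (a, b) \<noteq> 0\<close>.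
  Then \<open>s = \<rho> m (x, b)\<close> satisfies \<open>\<rho> s (x, x) = s\<close>, and \<open>\<rho> s (a, x) = 0\<close> unless \<open>x \<le> a\<close>.
  A linear functional \<open>\<mu>\<close> with \<open>\<mu> s = 1\<close> gives the colinear map \<open>\<phi> = (\<mu> \<otimes> id) \<circ> \<rho> : V \<rightarrow> E\<^sub>x\<close>.
  Conversely, injectivity of \<open>V\<close> extends \<open>e\<^sub>x\<^sub>,\<^sub>z \<mapsto> \<rho> s (z, x)\<close> (for \<open>z\<close> equivalent to \<open>x\<close>) to a
  colinear \<open>\<psi> : E\<^sub>x \<rightarrow> V\<close>; since injectivity is only available for test comodules in
  \<open>nat \<Rightarrow> k\<close>, the extension is done one finite interval \<open>{x..y}\<close> at a time and assembled
  with Zorn's lemma. Now \<open>\<phi> \<circ> \<psi>\<close> is a colinear endomorphism of \<open>E\<^sub>x\<close> fixing the coefficient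
  of \<open>e\<^sub>x\<^sub>,\<^sub>x\<close>, hence the identity, so \<open>V = \<psi>(E\<^sub>x) \<oplus> ker \<phi>\<close> and indecomposability
  forces \<open>ker \<phi> = 0\<close>.
\<close>

lemma
  assumes "is_comodule sc V \<rho>"
  shows comodule_zero: "0 \<in> V"
    and comodule_add: "m \<in> V \<Longrightarrow> n \<in> V \<Longrightarrow> m + n \<in> V"
    and comodule_scale: "m \<in> V \<Longrightarrow> sc r m \<in> V"
    and comodule_coact_closed: "m \<in> V \<Longrightarrow> \<rho> m p \<in> V"
    and comodule_coact_finite: "m \<in> V \<Longrightarrow> finite {p. \<rho> m p \<noteq> 0}"
    and comodule_coact_not_le: "m \<in> V \<Longrightarrow> \<not> a \<le> b \<Longrightarrow> \<rho> m (a, b) = 0"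
    and comodule_coact_add: "m \<in> V \<Longrightarrow> n \<in> V \<Longrightarrow> \<rho> (m + n) p = \<rho> m p + \<rho> n p"
    and comodule_coact_scale: "m \<in> V \<Longrightarrow> \<rho> (sc r m) p = sc r (\<rho> m p)"
    and comodule_coassoc: "m \<in> V \<Longrightarrow> a \<le> b \<Longrightarrow> c \<le> d \<Longrightarrow>
          \<rho> (\<rho> m (c, d)) (a, b) = (if b = c then \<rho> m (a, d) else 0)"
    and comodule_counit: "m \<in> V \<Longrightarrow> m = (\<Sum>z\<in>{z. \<rho> m (z, z) \<noteq> 0}. \<rho> m (z, z))"
  using assms unfolding is_comodule_def by (simp_all del: split_paired_All)

lemma is_comoduleI:
  assumes "0 \<in> V" "\<And>m n. m \<in> V \<Longrightarrow> n \<in> V \<Longrightarrow> m + n \<in> V" "\<And>c m. m \<in> V \<Longrightarrow> sc c m \<in> V"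
    "\<And>m p. m \<in> V \<Longrightarrow> \<rho> m p \<in> V"
    "\<And>m. m \<in> V \<Longrightarrow> finite {p. \<rho> m p \<noteq> 0}"
    "\<And>m a b. m \<in> V \<Longrightarrow> \<not> a \<le> b \<Longrightarrow> \<rho> m (a, b) = 0"
    "\<And>m n p. m \<in> V \<Longrightarrow> n \<in> V \<Longrightarrow> \<rho> (m + n) p = \<rho> m p + \<rho> n p"
    "\<And>c m p. m \<in> V \<Longrightarrow> \<rho> (sc c m) p = sc c (\<rho> m p)"
    "\<And>m a b c d. m \<in> V \<Longrightarrow> a \<le> b \<Longrightarrow> c \<le> d \<Longrightarrow>
       \<rho> (\<rho> m (c, d)) (a, b) = (if b = c then \<rho> m (a, d) else 0)"
    "\<And>m. m \<in> V \<Longrightarrow> m = (\<Sum>z\<in>{z. \<rho> m (z, z) \<noteq> 0}. \<rho> m (z, z))"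
  shows "is_comodule sc V \<rho>"
  unfolding is_comodule_def by (intro conjI ballI allI impI; (rule assms; assumption+))

lemma subcomoduleI:
  assumes "is_comodule sc V \<rho>" "A \<subseteq> V" "0 \<in> A"
    "\<And>m n. m \<in> A \<Longrightarrow> n \<in> A \<Longrightarrow> m + n \<in> A" "\<And>c m. m \<in> A \<Longrightarrow> sc c m \<in> A"
    "\<And>m p. m \<in> A \<Longrightarrow> \<rho> m p \<in> A"
  shows "is_comodule sc A \<rho>"
  using assms unfolding is_comodule_def by (simp add: subset_iff)

lemma
  assumes "comod_hom sc1 V \<rho> sc2 W \<sigma> f"
  shows comod_hom_closed: "m \<in> V \<Longrightarrow> f m \<in> W"
    and comod_hom_add: "m \<in> V \<Longrightarrow> n \<in> V \<Longrightarrow> f (m + n) = f m + f n"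
    and comod_hom_scale: "m \<in> V \<Longrightarrow> f (sc1 c m) = sc2 c (f m)"
    and comod_hom_coact: "m \<in> V \<Longrightarrow> \<sigma> (f m) p = f (\<rho> m p)"
  using assms unfolding comod_hom_def by (simp_all del: split_paired_All)

lemma comod_homI:
  assumes "\<And>m. m \<in> V \<Longrightarrow> f m \<in> W"
    "\<And>m n. m \<in> V \<Longrightarrow> n \<in> V \<Longrightarrow> f (m + n) = f m + f n"
    "\<And>c m. m \<in> V \<Longrightarrow> f (sc1 c m) = sc2 c (f m)"
    "\<And>m p. m \<in> V \<Longrightarrow> \<sigma> (f m) p = f (\<rho> m p)"
  shows "comod_hom sc1 V \<rho> sc2 W \<sigma> f"
  unfolding comod_hom_def using assms by blast

lemma comod_hom_subset: "comod_hom sc1 V \<rho> sc2 W \<sigma> f \<Longrightarrow> U \<subseteq> V \<Longrightarrow> comod_hom sc1 U \<rho> sc2 W \<sigma> f"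
  unfolding comod_hom_def by blast

lemma comod_hom_comp:
  "comod_hom sc1 U \<rho> sc2 V \<sigma> f \<Longrightarrow> comod_hom sc2 V \<sigma> sc3 W \<tau> g \<Longrightarrow> comod_hom sc1 U \<rho> sc3 W \<tau> (g \<circ> f)"
  unfolding comod_hom_def by auto

lemma additive_on_sum:
  fixes T :: "'a::ab_group_add \<Rightarrow> 'b::ab_group_add"
  assumes "0 \<in> A" "\<And>a b. a \<in> A \<Longrightarrow> b \<in> A \<Longrightarrow> a + b \<in> A"
    and add: "\<And>a b. a \<in> A \<Longrightarrow> b \<in> A \<Longrightarrow> T (a + b) = T a + T b"
    and "\<And>z. z \<in> Z \<Longrightarrow> f z \<in> A"
  shows "sum f Z \<in> A \<and> T (sum f Z) = (\<Sum>z\<in>Z. T (f z))"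
proof -
  have T0: "T 0 = 0" using add[OF \<open>0 \<in> A\<close> \<open>0 \<in> A\<close>] by simp
  show ?thesis
  proof (cases "finite Z")
    case True
    then show ?thesis using assms(4)
      by (induction Z rule: finite_induct) (simp_all add: T0 assms(1,2) add)
  qed (simp add: T0 assms(1))
qed

lemma sum_apply_fun: "(sum f A) z = (\<Sum>a\<in>A. f a z)"
  by (induction A rule: infinite_finite_induct) auto

lemma comodule_coact_zero: "is_comodule sc V \<rho> \<Longrightarrow> \<rho> 0 p = 0"
  using comodule_coact_add[of sc V \<rho> 0 0 p] comodule_zero by fastforce

lemma comod_hom_zero: "comod_hom sc1 V \<rho> sc2 W \<sigma> f \<Longrightarrow> 0 \<in> V \<Longrightarrow> f 0 = 0"
  using comod_hom_add[of sc1 V \<rho> sc2 W \<sigma> f 0 0] by simp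

lemma comodule_sum:
  assumes cm: "is_comodule sc V \<rho>" and "\<And>z. z \<in> Z \<Longrightarrow> f z \<in> V"
  shows "sum f Z \<in> V" "\<rho> (sum f Z) p = (\<Sum>z\<in>Z. \<rho> (f z) p)"
  using additive_on_sum[of V "\<lambda>m. \<rho> m p" Z f] assms
  by (simp_all add: comodule_zero comodule_add comodule_coact_add)

definition Ex_on :: "'x::preorder \<Rightarrow> 'x set \<Rightarrow> ('x \<times> 'x \<Rightarrow> 'k::zero) set" where
  "Ex_on x D = {v. finite {p. v p \<noteq> 0} \<and> (\<forall>p q. v (p, q) \<noteq> 0 \<longrightarrow> p = x \<and> x \<le> q \<and> q \<in> D)}"

definition down_closed_above :: "'x::preorder \<Rightarrow> 'x set \<Rightarrow> bool" where
  "down_closed_above x D \<longleftrightarrow> (\<forall>a b. x \<le> a \<longrightarrow> a \<le> b \<longrightarrow> b \<in> D \<longrightarrow> a \<in> D)"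

definition basis_vec :: "'x \<Rightarrow> 'x \<Rightarrow> ('x \<times> 'x \<Rightarrow> 'k::{zero,one})" where
  "basis_vec x y = (\<lambda>p. if p = (x, y) then 1 else 0)"

lemma Ex_eq_Ex_on_UNIV: "Ex x = Ex_on x UNIV"
  unfolding Ex_def Ex_on_def by simp

lemma Ex_onD: "v \<in> Ex_on x D \<Longrightarrow> v (p, q) \<noteq> 0 \<Longrightarrow> p = x \<and> x \<le> q \<and> q \<in> D"
  unfolding Ex_on_def by blast

lemma Ex_on_finite_support: "v \<in> Ex_on x D \<Longrightarrow> finite {p. v p \<noteq> 0}"
  unfolding Ex_on_def by blast

lemma Ex_on_mono: "D \<subseteq> D' \<Longrightarrow> Ex_on x D \<subseteq> Ex_on x D'"
  unfolding Ex_on_def by blast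

lemma basis_vec_nonzero: "(basis_vec x y :: _ \<Rightarrow> 'k::zero_neq_one) \<noteq> 0"
proof
  assume "basis_vec x y = (0 :: _ \<Rightarrow> 'k)"
  then have "basis_vec x y (x, y) = (0 :: 'k)" by simp
  then show False by (simp add: basis_vec_def)
qed

lemma basis_vec_in_Ex_on: "x \<le> y \<Longrightarrow> y \<in> D \<Longrightarrow> (basis_vec x y :: _ \<Rightarrow> 'k::zero_neq_one) \<in> Ex_on x D"
  unfolding Ex_on_def basis_vec_def
  by (auto intro: finite_subset[of _ "{(x, y)}"])

lemma Ex_on_subset_imp_subset:
  assumes "D \<subseteq> {x..}" and "Ex_on x D \<subseteq> (Ex_on x D' :: ('x::preorder \<times> 'x \<Rightarrow> 'k::zero_neq_one) set)"
  shows "D \<subseteq> D'"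
proof
  fix y assume "y \<in> D"
  with assms have "(basis_vec x y :: _ \<Rightarrow> 'k) \<in> Ex_on x D'"
    by (auto intro: basis_vec_in_Ex_on)
  then show "y \<in> D'" using Ex_onD[of _ x D' x y] by (force simp: basis_vec_def)
qed

lemma Ex_on_Union_chain:
  assumes "\<D> \<noteq> {}" "subset.chain UNIV \<D>" "finite W" "W \<subseteq> Ex_on x (\<Union>\<D>)"
  obtains D where "D \<in> \<D>" "W \<subseteq> Ex_on x D"
proof -
  let ?Q = "\<Union>v\<in>W. snd ` {p. v p \<noteq> 0}"
  have "?Q \<subseteq> \<Union>\<D>"
    using assms(4) Ex_onD by fastforce
  moreover have "finite ?Q"
    using assms(3,4) Ex_on_finite_support by blast
  ultimately obtain D where "D \<in> \<D>" "?Q \<subseteq> D"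
    using finite_subset_Union_chain assms(1,2) by metis
  moreover have "W \<subseteq> Ex_on x D"
  proof
    fix v assume "v \<in> W"
    with \<open>?Q \<subseteq> D\<close> assms(4) show "v \<in> Ex_on x D"
      unfolding Ex_on_def by force
  qed
  ultimately show thesis using that by blast
qed

lemma inc_coact_apply:
  "inc_coact v (a, b) (p, z) = (if a \<le> b \<and> z = a \<and> p \<le> a then v (p, b) else 0)"
  unfolding inc_coact_def by auto

lemma down_closed_above_Un: "down_closed_above x A \<Longrightarrow> down_closed_above x B \<Longrightarrow> down_closed_above x (A \<union> B)"
  unfolding down_closed_above_def by blast

lemma down_closed_above_Int: "down_closed_above x A \<Longrightarrow> down_closed_above x B \<Longrightarrow> down_closed_above x (A \<inter> B)"
  unfolding down_closed_above_def by blast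

lemma down_closed_above_Union: "(\<And>D. D \<in> \<D> \<Longrightarrow> down_closed_above x D) \<Longrightarrow> down_closed_above x (\<Union>\<D>)"
  unfolding down_closed_above_def by blast

lemma down_closed_above_Icc: "down_closed_above x {x..y}"
  unfolding down_closed_above_def by (meson atLeastAtMost_iff order_trans)

lemma down_closed_above_UNIV: "down_closed_above x UNIV"
  unfolding down_closed_above_def by blast

lemma inc_coact_finite_support:
  fixes x :: "'x::preorder"
  assumes locfin: "\<forall>a b :: 'x. finite {a..b}" and v: "v \<in> Ex_on x D"
  shows "finite {p. inc_coact v p \<noteq> 0}"
proof (rule finite_subset)
  show "{p. inc_coact v p \<noteq> 0} \<subseteq> (\<Union>q\<in>snd ` {p. v p \<noteq> 0}. {x..q} \<times> {q})"
  proof clarify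
    fix a b assume "inc_coact v (a, b) \<noteq> 0"
    then obtain p z where "inc_coact v (a, b) (p, z) \<noteq> 0" by (auto simp: fun_eq_iff)
    then have "a \<le> b" "p \<le> a" "v (p, b) \<noteq> 0" by (auto simp: inc_coact_apply split: if_splits)
    then show "(a, b) \<in> (\<Union>q\<in>snd ` {p. v p \<noteq> 0}. {x..q} \<times> {q})"
      using Ex_onD[OF v] by force
  qed
  show "finite (\<Union>q\<in>snd ` {p. v p \<noteq> 0}. {x..q} \<times> {q})"
    using Ex_on_finite_support[OF v] locfin by blast
qed

lemma inc_coact_counit:
  assumes v: "v \<in> Ex_on x D"
  shows "v = (\<Sum>z\<in>{z. inc_coact v (z, z) \<noteq> 0}. inc_coact v (z, z))"
proof -
  let ?Z = "{z. inc_coact v (z, z) \<noteq> 0}"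
  have "?Z \<subseteq> snd ` {p. v p \<noteq> 0}"
    by (force simp: fun_eq_iff inc_coact_apply split: if_splits)
  then have "finite ?Z"
    using Ex_on_finite_support[OF v] finite_subset by blast
  have "v (p, q) = (\<Sum>z\<in>?Z. inc_coact v (z, z) (p, q))" for p q
  proof -
    have "(\<Sum>z\<in>?Z. inc_coact v (z, z) (p, q)) = (\<Sum>z\<in>?Z. if z = q then (if p \<le> q then v (p, q) else 0) else 0)"
      by (rule sum.cong) (auto simp: inc_coact_apply)
    also have "\<dots> = v (p, q)"
    proof (cases "v (p, q) = 0")
      case False
      then have "p \<le> q" using Ex_onD[OF v] by blast
      with False have "q \<in> ?Z" by (auto simp: fun_eq_iff inc_coact_apply)
      with \<open>finite ?Z\<close> \<open>p \<le> q\<close> show ?thesis by (simp add: sum.delta')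
    qed (simp add: \<open>finite ?Z\<close> sum.delta')
    finally show ?thesis by simp
  qed
  then show ?thesis by (auto simp: fun_eq_iff sum_apply_fun)
qed

lemma Ex_on_comodule:
  fixes x :: "'x::preorder"
  assumes locfin: "\<forall>a b :: 'x. finite {a..b}" and D: "down_closed_above x D"
  shows "is_comodule pscale (Ex_on x D :: ('x \<times> 'x \<Rightarrow> 'k::field) set) inc_coact"
proof (rule is_comoduleI)
  fix v w :: "'x \<times> 'x \<Rightarrow> 'k" assume "v \<in> Ex_on x D" "w \<in> Ex_on x D"
  then show "v + w \<in> Ex_on x D" unfolding Ex_on_def
    by (auto intro: finite_subset[of _ "{p. v p \<noteq> 0} \<union> {p. w p \<noteq> 0}"])
      (metis add.right_neutral add.left_neutral)+
next
  fix v :: "'x \<times> 'x \<Rightarrow> 'k" and p assume v: "v \<in> Ex_on x D"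
  obtain a b :: 'x where p: "p = (a, b)" by force
  have "{q. inc_coact v (a, b) q \<noteq> 0} \<subseteq> {(x, a)}"
    by (auto simp: inc_coact_apply split: if_splits dest: Ex_onD[OF v])
  moreover have "q = x \<and> x \<le> r \<and> r \<in> D" if "inc_coact v (a, b) (q, r) \<noteq> 0" for q r
    using that D unfolding down_closed_above_def
    by (auto simp: inc_coact_apply split: if_splits dest: Ex_onD[OF v])
  ultimately show "inc_coact v p \<in> Ex_on x D"
    unfolding p Ex_on_def by (auto intro: finite_subset)
next
  fix v :: "'x \<times> 'x \<Rightarrow> 'k" and a b c d :: 'x assume "a \<le> b" "c \<le> d"
  then show "inc_coact (inc_coact v (c, d)) (a, b) = (if b = c then inc_coact v (a, d) else 0)"
    by (auto simp: fun_eq_iff inc_coact_apply intro: order_trans)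
next
  fix v :: "'x \<times> 'x \<Rightarrow> 'k" assume "v \<in> Ex_on x D"
  then show "finite {p. inc_coact v p \<noteq> 0}" "v = (\<Sum>z\<in>{z. inc_coact v (z, z) \<noteq> 0}. inc_coact v (z, z))"
    by (simp_all add: inc_coact_finite_support[OF locfin] inc_coact_counit)
qed (auto simp: Ex_on_def pscale_def inc_coact_def intro: finite_subset)

lemma Ex_comodule:
  "\<forall>a b :: 'x::preorder. finite {a..b} \<Longrightarrow> is_comodule pscale (Ex x :: ('x \<times> 'x \<Rightarrow> 'k::field) set) inc_coact"
  unfolding Ex_eq_Ex_on_UNIV by (rule Ex_on_comodule[OF _ down_closed_above_UNIV])

lemma comodule_transport:
  assumes cm: "is_comodule sc1 A \<rho>"
    and inv: "\<And>a. a \<in> A \<Longrightarrow> S (T a) = a"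
    and add: "\<And>a b. a \<in> A \<Longrightarrow> b \<in> A \<Longrightarrow> T (a + b) = T a + T b"
    and scale: "\<And>c a. a \<in> A \<Longrightarrow> T (sc1 c a) = sc2 c (T a)"
  shows "is_comodule sc2 (T ` A) (\<lambda>w p. T (\<rho> (S w) p))"
proof -
  have T0: "T 0 = 0"
    using add[OF comodule_zero[OF cm] comodule_zero[OF cm]] by simp
  have T_eq_0: "T a = 0 \<longleftrightarrow> a = 0" if "a \<in> A" for a
    using inv[OF that] inv[OF comodule_zero[OF cm]] T0 by metis
  have coact: "T (\<rho> (S (T a)) p) = T (\<rho> a p)" if "a \<in> A" for a p
    using inv[OF that] by simp
  have ST_add: "S (T a + T b) = a + b" if "a \<in> A" "b \<in> A" for a b
    by (metis add[OF that] comodule_add[OF cm that] inv)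
  have ST_scale: "S (sc2 c (T a)) = sc1 c a" if "a \<in> A" for a c
    by (metis scale[OF that] comodule_scale[OF cm that] inv)
  show ?thesis
  proof (rule is_comoduleI, goal_cases)
    case 1 show ?case using T0 comodule_zero[OF cm] by force
  next
    case (2 m n) then show ?case using add comodule_add[OF cm] by (auto simp flip: add)
  next
    case (3 c m) then show ?case using scale comodule_scale[OF cm] by (auto simp flip: scale)
  next
    case (4 m p)
    then obtain a where "a \<in> A" "m = T a" by blast
    then show ?case using imageI[OF comodule_coact_closed[OF cm \<open>a \<in> A\<close>], of T p] inv by simp
  next
    case (5 m)
    then obtain a where a: "a \<in> A" "m = T a" by blast
    have "T (\<rho> (S m) p) = 0 \<longleftrightarrow> \<rho> a p = 0" for p
      using a inv T_eq_0[OF comodule_coact_closed[OF cm a(1)]] by simp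
    then have "{p. T (\<rho> (S m) p) \<noteq> 0} = {p. \<rho> a p \<noteq> 0}" by blast
    then show ?case using comodule_coact_finite[OF cm a(1)] by simp
  next
    case (6 m a b) then show ?case using coact comodule_coact_not_le[OF cm] T0 by auto
  next
    case (7 m n p)
    then obtain a b where ab: "a \<in> A" "b \<in> A" "m = T a" "n = T b" by blast
    then show ?case
      by (simp add: ST_add inv add comodule_coact_add[OF cm] comodule_coact_closed[OF cm])
  next
    case (8 c m p)
    then obtain a where a: "a \<in> A" "m = T a" by blast
    then show ?case
      by (simp add: ST_scale inv scale comodule_coact_scale[OF cm] comodule_coact_closed[OF cm])
  next
    case (9 m a b c d)
    then obtain u where u: "u \<in> A" "m = T u" by blast
    then show ?case
      by (simp add: inv T0 comodule_coact_closed[OF cm] comodule_coassoc[OF cm u(1) 9(2,3)])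
  next
    case (10 m)
    then obtain a where a: "a \<in> A" "m = T a" by blast
    let ?Z = "{z. \<rho> a (z, z) \<noteq> 0}"
    have "T a = T (\<Sum>z\<in>?Z. \<rho> a (z, z))"
      using comodule_counit[OF cm a(1)] by (rule arg_cong)
    also have "\<dots> = (\<Sum>z\<in>?Z. T (\<rho> a (z, z)))"
      by (rule conjunct2[OF additive_on_sum[OF comodule_zero[OF cm] comodule_add[OF cm] add]])
        (simp_all add: comodule_coact_closed[OF cm a(1)])
    also have "?Z = {z. T (\<rho> a (z, z)) \<noteq> 0}"
      using T_eq_0[OF comodule_coact_closed[OF cm a(1)]] by simp
    finally show ?case unfolding a(2) inv[OF a(1)] .
  qed
qed

lemma comod_hom_transport_inv:
  assumes h: "comod_hom sc1 A \<rho> sc V \<sigma> \<psi>" and cm: "is_comodule sc1 A \<rho>"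
    and inv: "\<And>a. a \<in> A \<Longrightarrow> S (T a) = a"
    and add: "\<And>a b. a \<in> A \<Longrightarrow> b \<in> A \<Longrightarrow> T (a + b) = T a + T b"
    and scale: "\<And>c a. a \<in> A \<Longrightarrow> T (sc1 c a) = sc2 c (T a)"
  shows "comod_hom sc2 (T ` A) (\<lambda>w p. T (\<rho> (S w) p)) sc V \<sigma> (\<psi> \<circ> S)"
proof (rule comod_homI, goal_cases)
  case (1 m) then show ?case using inv comod_hom_closed[OF h] by auto
next
  case (2 m n)
  then obtain a b where "a \<in> A" "b \<in> A" "m = T a" "n = T b" by blast
  then show ?case
    by (metis add comod_hom_add[OF h] comodule_add[OF cm] comp_apply inv)
next
  case (3 c m)
  then obtain a where "a \<in> A" "m = T a" by blast
  then show ?case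
    by (metis scale comod_hom_scale[OF h] comodule_scale[OF cm] comp_apply inv)
next
  case (4 m p)
  then obtain a where "a \<in> A" "m = T a" by blast
  then show ?case
    by (simp add: inv comod_hom_coact[OF h] comodule_coact_closed[OF cm])
qed

lemma comod_hom_transport:
  assumes "comod_hom sc2 (T ` A) (\<lambda>w p. T (\<rho> (S w) p)) sc V \<sigma> h"
    and "\<And>a. a \<in> A \<Longrightarrow> S (T a) = a"
    and "\<And>a b. a \<in> A \<Longrightarrow> b \<in> A \<Longrightarrow> T (a + b) = T a + T b"
    and "\<And>c a. a \<in> A \<Longrightarrow> T (sc1 c a) = sc2 c (T a)"
  shows "comod_hom sc1 A \<rho> sc V \<sigma> (h \<circ> T)"
  using assms unfolding comod_hom_def by auto

text \<open>
  The injectivity hypothesis only quantifies over test comodules inside \<open>nat \<Rightarrow> 'k\<close>; an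
  extension problem is moved there along a linear embedding \<open>T\<close> with left inverse \<open>S\<close>.
\<close>

lemma injective_comodule_extend_embedded:
  fixes T :: "'a::ab_group_add \<Rightarrow> nat \<Rightarrow> 'k::field"
  assumes inj: "injective_comodule sc V \<sigma>"
    and P: "is_comodule sc1 P \<rho>" and N: "is_comodule sc1 N \<rho>" and "N \<subseteq> P"
    and inv: "\<And>a. a \<in> P \<Longrightarrow> S (T a) = a"
    and add: "\<And>a b. a \<in> P \<Longrightarrow> b \<in> P \<Longrightarrow> T (a + b) = T a + T b"
    and scale: "\<And>c a. a \<in> P \<Longrightarrow> T (sc1 c a) = pscale c (T a)"
    and g: "comod_hom sc1 N \<rho> sc V \<sigma> g"
  obtains h where "comod_hom sc1 P \<rho> sc V \<sigma> h" "\<forall>n\<in>N. h n = g n"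
proof -
  let ?\<tau> = "\<lambda>w p. T (\<rho> (S w) p)"
  have invN: "\<And>a. a \<in> N \<Longrightarrow> S (T a) = a"
    and addN: "\<And>a b. a \<in> N \<Longrightarrow> b \<in> N \<Longrightarrow> T (a + b) = T a + T b"
    and scaleN: "\<And>c a. a \<in> N \<Longrightarrow> T (sc1 c a) = pscale c (T a)"
    using inv add scale \<open>N \<subseteq> P\<close> by (simp_all add: subset_iff)
  have "comod_hom pscale (T ` N) ?\<tau> pscale (T ` P) ?\<tau> id"
    using \<open>N \<subseteq> P\<close> unfolding comod_hom_def by auto
  then have "\<exists>h'. comod_hom pscale (T ` P) ?\<tau> sc V \<sigma> h' \<and> (\<forall>w\<in>T ` N. h' (id w) = (g \<circ> S) w)"
    using comodule_transport[OF P inv add scale] comodule_transport[OF N invN addN scaleN]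
      comod_hom_transport_inv[OF g N invN addN scaleN]
    by (intro inj[unfolded injective_comodule_def, rule_format] conjI) (simp_all add: id_def comp_def)
  then obtain h' where h': "comod_hom pscale (T ` P) ?\<tau> sc V \<sigma> h'"
    and ext: "\<forall>w\<in>T ` N. h' w = (g \<circ> S) w"
    by auto
  show thesis
  proof
    show "comod_hom sc1 P \<rho> sc V \<sigma> (h' \<circ> T)"
      by (rule comod_hom_transport[OF h' inv add scale])
    show "\<forall>n\<in>N. (h' \<circ> T) n = g n"
      using ext invN by simp
  qed
qed

lemma injective_comodule_extend_Ex_on_finite:
  fixes x :: "'x::preorder" and sc :: "'k::field \<Rightarrow> 'm::ab_group_add \<Rightarrow> 'm"
  assumes locfin: "\<forall>a b :: 'x. finite {a..b}" and inj: "injective_comodule sc V \<sigma>"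
    and "finite F" "down_closed_above x F" "down_closed_above x G" "G \<subseteq> F"
    and \<psi>: "comod_hom pscale (Ex_on x G) inc_coact sc V \<sigma> \<psi>"
  obtains h where "comod_hom pscale (Ex_on x F) inc_coact sc V \<sigma> h" "\<forall>v\<in>Ex_on x G. h v = \<psi> v"
proof -
  obtain enc :: "'x \<Rightarrow> nat" where enc: "inj_on enc F"
    using finite_imp_inj_to_nat_seg[OF \<open>finite F\<close>] by blast
  define T :: "('x \<times> 'x \<Rightarrow> 'k) \<Rightarrow> nat \<Rightarrow> 'k"
    where "T v = (\<lambda>i. if i \<in> enc ` F then v (x, inv_into F enc i) else 0)" for v
  define S :: "(nat \<Rightarrow> 'k) \<Rightarrow> 'x \<times> 'x \<Rightarrow> 'k"
    where "S w = (\<lambda>(p, q). if p = x \<and> q \<in> F then w (enc q) else 0)" for w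
  have "S (T v) = v" if "v \<in> Ex_on x F" for v
    using enc Ex_onD[OF that] by (fastforce simp: S_def T_def fun_eq_iff)
  moreover have "T (v + w) = T v + T w" "T (pscale c v) = pscale c (T v)" for v w c
    by (auto simp: T_def pscale_def)
  ultimately show thesis
    using injective_comodule_extend_embedded[OF inj Ex_on_comodule[OF locfin \<open>down_closed_above x F\<close>]
        Ex_on_comodule[OF locfin \<open>down_closed_above x G\<close>] Ex_on_mono[OF \<open>G \<subseteq> F\<close>], of S T, OF _ _ _ \<psi>]
      that by blast
qed

lemma comod_hom_Ex_on_eq_id:
  fixes x :: "'x::preorder"
  assumes f: "comod_hom pscale (Ex_on x D) inc_coact pscale (Ex x) inc_coact f"
    and "x \<in> D" and one: "f (basis_vec x x) (x, x) = (1::'k::field)" and v: "v \<in> Ex_on x D"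
  shows "f v = v"
proof
  fix pq :: "'x \<times> 'x"
  obtain p q where pq: "pq = (p, q)" by force
  have fv: "f v \<in> Ex_on x UNIV"
    using comod_hom_closed[OF f v] by (simp add: Ex_eq_Ex_on_UNIV)
  show "f v pq = v pq"
  proof (cases "p = x \<and> x \<le> q")
    case False
    then have "f v (p, q) = 0" "v (p, q) = 0"
      using Ex_onD[OF fv, of p q] Ex_onD[OF v, of p q] by blast+
    then show ?thesis using pq by simp
  next
    case True
    \<comment> \<open>the coaction moves the coefficient at (x,q) onto the diagonal entry (x,x)\<close>
    have col: "inc_coact v (x, q) = pscale (v (x, q)) (basis_vec x x)"
    proof
      fix rz :: "'x \<times> 'x"
      obtain r z where rz: "rz = (r, z)" by force
      show "inc_coact v (x, q) rz = pscale (v (x, q)) (basis_vec x x) rz"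
        using True Ex_onD[OF v, of r q] unfolding rz
        by (auto simp: inc_coact_apply pscale_def basis_vec_def)
    qed
    have "f v (x, q) = inc_coact (f v) (x, q) (x, x)"
      using True by (simp add: inc_coact_apply)
    also have "\<dots> = f (pscale (v (x, q)) (basis_vec x x)) (x, x)"
      by (simp add: comod_hom_coact[OF f v] col)
    also have "\<dots> = v (x, q)"
      using comod_hom_scale[OF f basis_vec_in_Ex_on[OF order_refl \<open>x \<in> D\<close>]] one
      by (simp add: pscale_def)
    finally show ?thesis using pq True by simp
  qed
qed

definition restrict_cols :: "'x set \<Rightarrow> ('x \<times> 'x \<Rightarrow> 'k::zero) \<Rightarrow> 'x \<times> 'x \<Rightarrow> 'k" where
  "restrict_cols E v = (\<lambda>(p, q). if q \<in> E then v (p, q) else 0)"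

lemma restrict_cols_Ex_on:
  assumes "v \<in> Ex_on x D" shows "restrict_cols E v \<in> Ex_on x (D \<inter> E)"
proof -
  have "{p. restrict_cols E v p \<noteq> 0} \<subseteq> {p. v p \<noteq> 0}"
    by (auto simp: restrict_cols_def split: if_splits)
  then show ?thesis
    using assms unfolding Ex_on_def by (auto simp: restrict_cols_def intro: finite_subset)
qed

lemma restrict_cols_add: "restrict_cols E (v + w) = restrict_cols E v + restrict_cols E (w :: _ \<Rightarrow> 'k::monoid_add)"
  by (auto simp: fun_eq_iff restrict_cols_def)

lemma restrict_cols_scale: "restrict_cols E (pscale c v) = pscale c (restrict_cols E v)"
  by (auto simp: fun_eq_iff restrict_cols_def pscale_def)

lemma restrict_cols_Compl_add: "restrict_cols E v + restrict_cols (- E) v = (v :: _ \<Rightarrow> 'k::monoid_add)"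
  by (auto simp: fun_eq_iff restrict_cols_def)

lemma restrict_cols_id: "v \<in> Ex_on x D \<Longrightarrow> D \<subseteq> E \<Longrightarrow> restrict_cols E v = v"
  by (auto simp: fun_eq_iff restrict_cols_def dest: Ex_onD)

lemma restrict_cols_zero: "v \<in> Ex_on x D \<Longrightarrow> D \<inter> E = {} \<Longrightarrow> restrict_cols E v = 0"
  by (auto simp: fun_eq_iff restrict_cols_def dest: Ex_onD)

definition glue :: "'x set \<Rightarrow> (('x \<times> 'x \<Rightarrow> 'k::zero) \<Rightarrow> 'm::plus) \<Rightarrow> (('x \<times> 'x \<Rightarrow> 'k) \<Rightarrow> 'm) \<Rightarrow> ('x \<times> 'x \<Rightarrow> 'k) \<Rightarrow> 'm" where
  "glue D \<psi> h v = \<psi> (restrict_cols D v) + h (restrict_cols (- D) v)"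

lemma glue_eq_left:
  fixes h :: "('x::preorder \<times> 'x \<Rightarrow> 'k::zero) \<Rightarrow> 'm::monoid_add"
  assumes "v \<in> Ex_on x D" "h 0 = 0"
  shows "glue D \<psi> h v = \<psi> v"
  using restrict_cols_id[OF assms(1) order_refl] restrict_cols_zero[OF assms(1), of "- D"] assms(2)
  by (simp add: glue_def)

lemma glue_eq_right:
  assumes h: "comod_hom sc1 (Ex_on x F) \<rho> sc V \<sigma> h" and agree: "\<forall>v\<in>Ex_on x (D \<inter> F). h v = \<psi> v"
    and v: "v \<in> Ex_on x F"
  shows "glue D \<psi> h v = h (v :: _ \<Rightarrow> 'k::ab_group_add)"
proof -
  have r1: "restrict_cols D v \<in> Ex_on x (D \<inter> F)"
    using restrict_cols_Ex_on[OF v, of D] by (simp add: Int_commute)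
  have "glue D \<psi> h v = h (restrict_cols D v) + h (restrict_cols (- D) v)"
    using agree r1 by (simp add: glue_def)
  also have "\<dots> = h (restrict_cols D v + restrict_cols (- D) v)"
    using r1 restrict_cols_Ex_on[OF v, of "- D"] Ex_on_mono[of "D \<inter> F" F x] Ex_on_mono[of "F \<inter> - D" F x]
    by (intro comod_hom_add[OF h, symmetric]) auto
  finally show ?thesis by (simp only: restrict_cols_Compl_add)
qed

lemma comod_hom_glue:
  fixes x :: "'x::preorder" and sc :: "'k::field \<Rightarrow> 'm::ab_group_add \<Rightarrow> 'm"
  assumes vs: "vector_space sc" and com: "is_comodule sc V \<rho>"
    and locfin: "\<forall>a b :: 'x. finite {a..b}"
    and D: "down_closed_above x D" and F: "down_closed_above x F"
    and \<psi>: "comod_hom pscale (Ex_on x D) inc_coact sc V \<rho> \<psi>"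
    and h: "comod_hom pscale (Ex_on x F) inc_coact sc V \<rho> h"
    and agree: "\<forall>v\<in>Ex_on x (D \<inter> F). h v = \<psi> v"
  shows "comod_hom pscale (Ex_on x (D \<union> F)) inc_coact sc V \<rho> (glue D \<psi> h)"
proof -
  interpret vs: vector_space sc by (rule vs)
  let ?r1 = "restrict_cols D :: ('x \<times> 'x \<Rightarrow> 'k) \<Rightarrow> _" and ?r2 = "restrict_cols (- D)"
  have cmD: "is_comodule pscale (Ex_on x D) inc_coact"
    and cmF: "is_comodule pscale (Ex_on x F) inc_coact"
    and cmDF: "is_comodule pscale (Ex_on x (D \<union> F)) inc_coact"
    using Ex_on_comodule[OF locfin] D F down_closed_above_Un by blast+
  have D_sub: "Ex_on x D \<subseteq> Ex_on x (D \<union> F)" and F_sub: "Ex_on x F \<subseteq> Ex_on x (D \<union> F)"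
    by (simp_all add: Ex_on_mono)
  have r1: "?r1 v \<in> Ex_on x D" and r2: "?r2 v \<in> Ex_on x F" if "v \<in> Ex_on x (D \<union> F)" for v
    using restrict_cols_Ex_on[OF that, of D] restrict_cols_Ex_on[OF that, of "- D"]
      Ex_on_mono[of "(D \<union> F) \<inter> D" D x] Ex_on_mono[of "(D \<union> F) \<inter> - D" F x] by blast+
  have h0: "h 0 = 0" by (rule comod_hom_zero[OF h comodule_zero[OF cmF]])
  have add: "glue D \<psi> h (v + w) = glue D \<psi> h v + glue D \<psi> h w"
    if "v \<in> Ex_on x (D \<union> F)" "w \<in> Ex_on x (D \<union> F)" for v w
    using comod_hom_add[OF \<psi> r1[OF that(1)] r1[OF that(2)]] comod_hom_add[OF h r2[OF that(1)] r2[OF that(2)]]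
    by (simp add: glue_def restrict_cols_add algebra_simps)
  show ?thesis
  proof (rule comod_homI)
    fix v :: "'x \<times> 'x \<Rightarrow> 'k" assume "v \<in> Ex_on x (D \<union> F)"
    then show "glue D \<psi> h v \<in> V"
      unfolding glue_def by (intro comodule_add[OF com] comod_hom_closed[OF \<psi>] comod_hom_closed[OF h] r1 r2)
  next
    fix v w :: "'x \<times> 'x \<Rightarrow> 'k" assume "v \<in> Ex_on x (D \<union> F)" "w \<in> Ex_on x (D \<union> F)"
    then show "glue D \<psi> h (v + w) = glue D \<psi> h v + glue D \<psi> h w" by (rule add)
  next
    fix c and v :: "'x \<times> 'x \<Rightarrow> 'k" assume v: "v \<in> Ex_on x (D \<union> F)"
    then show "glue D \<psi> h (pscale c v) = sc c (glue D \<psi> h v)"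
      using comod_hom_scale[OF \<psi> r1[OF v]] comod_hom_scale[OF h r2[OF v]]
      by (simp add: glue_def restrict_cols_scale vs.scale_right_distrib)
  next
    fix v :: "'x \<times> 'x \<Rightarrow> 'k" and p assume v: "v \<in> Ex_on x (D \<union> F)"
    have c1: "inc_coact (?r1 v) p \<in> Ex_on x D" and c2: "inc_coact (?r2 v) p \<in> Ex_on x F"
      using comodule_coact_closed[OF cmD r1[OF v]] comodule_coact_closed[OF cmF r2[OF v]] .
    have "\<rho> (glue D \<psi> h v) p = \<psi> (inc_coact (?r1 v) p) + h (inc_coact (?r2 v) p)"
      unfolding glue_def
      using comodule_coact_add[OF com comod_hom_closed[OF \<psi> r1[OF v]] comod_hom_closed[OF h r2[OF v]]]
        comod_hom_coact[OF \<psi> r1[OF v]] comod_hom_coact[OF h r2[OF v]] by simp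
    also have "\<dots> = glue D \<psi> h (inc_coact (?r1 v) p + inc_coact (?r2 v) p)"
      using add[OF subsetD[OF D_sub c1] subsetD[OF F_sub c2]]
        glue_eq_left[where h = h and \<psi> = \<psi>, OF c1 h0] glue_eq_right[OF h agree c2] by simp
    also have "\<dots> = glue D \<psi> h (inc_coact v p)"
      using comodule_coact_add[OF cmDF subsetD[OF D_sub r1[OF v]] subsetD[OF F_sub r2[OF v]], of p]
      by (simp add: restrict_cols_Compl_add)
    finally show "\<rho> (glue D \<psi> h v) p = glue D \<psi> h (inc_coact v p)" .
  qed
qed

lemma comodule_diff:
  assumes "vector_space sc" "is_comodule sc V \<rho>" "m \<in> V" "n \<in> V"
  shows "m - n \<in> V"
proof -
  interpret vs: vector_space sc by (rule assms(1))
  have "m + sc (- 1) n \<in> V" by (rule comodule_add[OF assms(2,3) comodule_scale[OF assms(2,4)]])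
  then show ?thesis by (simp add: vs.scale_minus_left)
qed

lemma comod_hom_diff:
  assumes "vector_space sc" "is_comodule sc V \<rho>" "comod_hom sc V \<rho> sc2 W \<sigma> f" "m \<in> V" "n \<in> V"
  shows "f (m - n) = f m - f n"
  using comod_hom_add[OF assms(3) comodule_diff[OF assms(1,2,4,5)] assms(5)] by (simp add: algebra_simps)

lemma comod_hom_image_comodule:
  assumes W: "is_comodule sc1 W \<sigma>" and \<psi>: "comod_hom sc1 W \<sigma> sc V \<rho> \<psi>" and V: "is_comodule sc V \<rho>"
  shows "is_comodule sc (\<psi> ` W) \<rho>"
proof (rule subcomoduleI[OF V])
  show "\<psi> ` W \<subseteq> V" using comod_hom_closed[OF \<psi>] by blast
  show "0 \<in> \<psi> ` W"
    using comod_hom_zero[OF \<psi> comodule_zero[OF W]] comodule_zero[OF W] by force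
  fix m n c p assume "m \<in> \<psi> ` W" "n \<in> \<psi> ` W"
  then obtain a b where ab: "a \<in> W" "b \<in> W" "m = \<psi> a" "n = \<psi> b" by blast
  show "m + n \<in> \<psi> ` W"
    using ab comod_hom_add[OF \<psi> ab(1,2)] comodule_add[OF W ab(1,2)] by (metis image_eqI)
  show "sc c m \<in> \<psi> ` W"
    using ab comod_hom_scale[OF \<psi> ab(1)] comodule_scale[OF W ab(1)] by (metis image_eqI)
  show "\<rho> m p \<in> \<psi> ` W"
    using ab comod_hom_coact[OF \<psi> ab(1)] comodule_coact_closed[OF W ab(1)] by (metis image_eqI)
qed

lemma comod_hom_kernel_comodule:
  assumes V: "is_comodule sc V \<rho>" and f: "comod_hom sc V \<rho> sc2 W \<sigma> f" and W: "is_comodule sc2 W \<sigma>"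
    and sc2_0: "\<And>c. sc2 c 0 = 0"
  shows "is_comodule sc {m \<in> V. f m = 0} \<rho>"
proof (rule subcomoduleI[OF V])
  show "0 \<in> {m \<in> V. f m = 0}" using comod_hom_zero[OF f] comodule_zero[OF V] by blast
  fix m n c p assume m: "m \<in> {m \<in> V. f m = 0}" and "n \<in> {m \<in> V. f m = 0}"
  then show "m + n \<in> {m \<in> V. f m = 0}"
    using comod_hom_add[OF f] comodule_add[OF V] by simp
  show "sc c m \<in> {m \<in> V. f m = 0}"
    using m comod_hom_scale[OF f] comodule_scale[OF V] sc2_0 by simp
  show "\<rho> m p \<in> {m \<in> V. f m = 0}"
    using m comod_hom_coact[OF f, of m p] comodule_coact_closed[OF V] comodule_coact_zero[OF W] by simp
qed auto

lemma indecomposable_retraction_kernel: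
  assumes vs: "vector_space sc" and V: "is_comodule sc V \<rho>" and W: "is_comodule sc2 W \<sigma>"
    and indec: "indecomposable_comodule sc V \<rho>" and "W \<noteq> {0}" and sc2_0: "\<And>c. sc2 c 0 = 0"
    and \<phi>: "comod_hom sc V \<rho> sc2 W \<sigma> \<phi>" and \<psi>: "comod_hom sc2 W \<sigma> sc V \<rho> \<psi>"
    and retr: "\<And>w. w \<in> W \<Longrightarrow> \<phi> (\<psi> w) = w"
  shows "{m \<in> V. \<phi> m = 0} = {0}"
proof -
  let ?A = "\<psi> ` W" and ?B = "{m \<in> V. \<phi> m = 0}"
  have \<phi>0: "\<phi> 0 = 0" and \<psi>0: "\<psi> 0 = 0"
    using comod_hom_zero[OF \<phi> comodule_zero[OF V]] comod_hom_zero[OF \<psi> comodule_zero[OF W]] .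
  have AV: "?A \<subseteq> V" using comod_hom_closed[OF \<psi>] by blast
  have BV: "?B \<subseteq> V" by blast
  have AB: "?A \<inter> ?B = {0}"
    using retr \<psi>0 \<phi>0 comodule_zero[OF W] comodule_zero[OF V] by auto
  have sum: "\<forall>m\<in>V. \<exists>a\<in>?A. \<exists>b\<in>?B. m = a + b"
  proof
    fix m assume m: "m \<in> V"
    then have "\<phi> m \<in> W" "\<psi> (\<phi> m) \<in> V"
      using comod_hom_closed[OF \<phi> m] comod_hom_closed[OF \<psi>] by blast+
    then have "m - \<psi> (\<phi> m) \<in> ?B"
      using comod_hom_diff[OF vs V \<phi> m] comodule_diff[OF vs V m] retr by simp
    with \<open>\<phi> m \<in> W\<close> show "\<exists>a\<in>?A. \<exists>b\<in>?B. m = a + b" by force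
  qed
  have "?A = {0} \<or> ?B = {0}"
    by (rule indec[unfolded indecomposable_comodule_def, THEN conjunct2, rule_format], intro conjI)
      (fact AV BV comod_hom_image_comodule[OF W \<psi> V] comod_hom_kernel_comodule[OF V \<phi> W sc2_0] AB sum)+
  moreover have "?A \<noteq> {0}"
  proof
    assume "?A = {0}"
    obtain w where "w \<in> W" "w \<noteq> 0" using \<open>W \<noteq> {0}\<close> comodule_zero[OF W] by blast
    with \<open>?A = {0}\<close> have "w = \<phi> 0" using retr by (metis image_eqI singletonD)
    with \<open>w \<noteq> 0\<close> \<phi>0 show False by simp
  qed
  ultimately show ?thesis by blast
qed

lemma indecomposable_retraction_iso:
  assumes vs: "vector_space sc" and V: "is_comodule sc V \<rho>" and W: "is_comodule sc2 W \<sigma>"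
    and indec: "indecomposable_comodule sc V \<rho>" and "W \<noteq> {0}" and sc2_0: "\<And>c. sc2 c 0 = 0"
    and \<phi>: "comod_hom sc V \<rho> sc2 W \<sigma> \<phi>" and \<psi>: "comod_hom sc2 W \<sigma> sc V \<rho> \<psi>"
    and retr: "\<And>w. w \<in> W \<Longrightarrow> \<phi> (\<psi> w) = w"
  shows "comod_iso sc V \<rho> sc2 W \<sigma>"
proof -
  have ker: "{m \<in> V. \<phi> m = 0} = {0}"
    by (rule indecomposable_retraction_kernel[OF assms])
  have "inj_on \<phi> V"
  proof (rule inj_onI)
    fix m n assume "m \<in> V" "n \<in> V" "\<phi> m = \<phi> n"
    then have "m - n \<in> {m \<in> V. \<phi> m = 0}"
      using comodule_diff[OF vs V] comod_hom_diff[OF vs V \<phi>] by simp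
    then show "m = n" using ker by simp
  qed
  moreover have "\<phi> ` V = W"
  proof
    show "\<phi> ` V \<subseteq> W" using comod_hom_closed[OF \<phi>] by blast
    show "W \<subseteq> \<phi> ` V" using comod_hom_closed[OF \<psi>] retr by (metis image_eqI subsetI)
  qed
  ultimately show ?thesis
    unfolding comod_iso_def bij_betw_def using \<phi> by blast
qed

text \<open>\<open>(\<mu> \<otimes> id) \<circ> \<rho>\<close> followed by the projection of \<open>IC(X)\<close> onto \<open>E\<^sub>x\<close>.\<close>

definition Ex_projection :: "('m \<Rightarrow> 'k) \<Rightarrow> ('m \<Rightarrow> 'x \<times> 'x \<Rightarrow> 'm) \<Rightarrow> 'x \<Rightarrow> 'm \<Rightarrow> 'x \<times> 'x \<Rightarrow> 'k::zero" where
  "Ex_projection \<mu> \<rho> x m = (\<lambda>(p, q). if p = x then \<mu> (\<rho> m (x, q)) else 0)"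

lemma Ex_projection_apply: "Ex_projection \<mu> \<rho> x m (p, q) = (if p = x then \<mu> (\<rho> m (x, q)) else 0)"
  by (simp add: Ex_projection_def)

lemma Ex_projection_coact:
  fixes \<rho> :: "'m::ab_group_add \<Rightarrow> 'x::preorder \<times> 'x \<Rightarrow> 'm" and \<mu> :: "'m \<Rightarrow> 'k::zero"
  assumes com: "is_comodule sc V \<rho>" and \<mu>0: "\<mu> 0 = 0" and m: "m \<in> V"
  shows "inc_coact (Ex_projection \<mu> \<rho> x m) (a, b) = Ex_projection \<mu> \<rho> x (\<rho> m (a, b))"
proof (cases "a \<le> b")
  case False
  then show ?thesis
    using comodule_coact_not_le[OF com m False] comodule_coact_zero[OF com]
    by (auto simp: fun_eq_iff inc_coact_def Ex_projection_apply \<mu>0)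
next
  case True
  have "inc_coact (Ex_projection \<mu> \<rho> x m) (a, b) (r, z) = Ex_projection \<mu> \<rho> x (\<rho> m (a, b)) (r, z)" for r z
  proof (cases "x \<le> z")
    case True
    with \<open>a \<le> b\<close> show ?thesis
      using comodule_coassoc[OF com m True \<open>a \<le> b\<close>] by (auto simp: inc_coact_apply Ex_projection_apply \<mu>0)
  next
    case False
    then show ?thesis
      using comodule_coact_not_le[OF com comodule_coact_closed[OF com m] False]
      by (auto simp: inc_coact_apply Ex_projection_apply \<mu>0)
  qed
  then show ?thesis by (auto simp: fun_eq_iff)
qed

lemma comod_hom_Ex_projection:
  fixes sc :: "'k::field \<Rightarrow> 'm::ab_group_add \<Rightarrow> 'm" and \<rho> :: "'m \<Rightarrow> 'x::preorder \<times> 'x \<Rightarrow> 'm"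
  assumes com: "is_comodule sc V \<rho>"
    and \<mu>_add: "\<And>a b. \<mu> (a + b) = \<mu> a + \<mu> b" and \<mu>_scale: "\<And>c a. \<mu> (sc c a) = c * \<mu> a"
  shows "comod_hom sc V \<rho> pscale (Ex x) inc_coact (Ex_projection \<mu> \<rho> x)"
proof (rule comod_homI)
  have \<mu>0: "\<mu> 0 = 0" using \<mu>_add[of 0 0] by (metis add.right_neutral add_left_cancel)
  fix m n c p assume m: "m \<in> V"
  have "{p. Ex_projection \<mu> \<rho> x m p \<noteq> 0} \<subseteq> {p. \<rho> m p \<noteq> 0}"
    by (force simp: Ex_projection_def \<mu>0 split: if_splits)
  then have "finite {p. Ex_projection \<mu> \<rho> x m p \<noteq> 0}"
    using comodule_coact_finite[OF com m] by (rule finite_subset)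
  moreover have "p = x \<and> x \<le> q" if "Ex_projection \<mu> \<rho> x m (p, q) \<noteq> 0" for p q
    using that comodule_coact_not_le[OF com m, of x q] \<mu>0
    by (cases "x \<le> q") (auto simp: Ex_projection_apply split: if_splits)
  ultimately show "Ex_projection \<mu> \<rho> x m \<in> Ex x" unfolding Ex_def by blast
  show "Ex_projection \<mu> \<rho> x (sc c m) = pscale c (Ex_projection \<mu> \<rho> x m)"
    using m by (auto simp: fun_eq_iff Ex_projection_def comodule_coact_scale[OF com] \<mu>_scale pscale_def)
  show "inc_coact (Ex_projection \<mu> \<rho> x m) p = Ex_projection \<mu> \<rho> x (\<rho> m p)"
    using Ex_projection_coact[where \<mu> = \<mu>, OF com \<mu>0 m] by (cases p) simp
  assume n: "n \<in> V"
  show "Ex_projection \<mu> \<rho> x (m + n) = Ex_projection \<mu> \<rho> x m + Ex_projection \<mu> \<rho> x n"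
    by (auto simp: fun_eq_iff Ex_projection_def comodule_coact_add[OF com m n] \<mu>_add)
qed

lemma exists_linear_functional_one:
  fixes sc :: "'k::field \<Rightarrow> 'm::ab_group_add \<Rightarrow> 'm"
  assumes vs: "vector_space sc" and "s \<noteq> 0"
  obtains \<mu> :: "'m \<Rightarrow> 'k" where "\<And>a b. \<mu> (a + b) = \<mu> a + \<mu> b" "\<And>c a. \<mu> (sc c a) = c * \<mu> a" "\<mu> s = 1"
proof -
  have "vector_space ((*) :: 'k \<Rightarrow> 'k \<Rightarrow> 'k)"
    by unfold_locales (auto simp: algebra_simps)
  then interpret vector_space_pair sc "(*) :: 'k \<Rightarrow> 'k \<Rightarrow> 'k"
    using vs by (simp add: vector_space_pair_def)
  have "vs1.independent {s}" using \<open>s \<noteq> 0\<close> by (simp add: vs1.independent_insert)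
  from linear_independent_extend[OF this, of "\<lambda>_. 1"]
  obtain g where "Vector_Spaces.linear sc (*) g" "g s = 1" by auto
  with that show thesis by (auto simp: Vector_Spaces.linear_iff)
qed

lemma finite_has_preorder_minimal:
  fixes A :: "'a::preorder set"
  assumes "finite A" "A \<noteq> {}"
  obtains m where "m \<in> A" "\<And>a. a \<in> A \<Longrightarrow> a \<le> m \<Longrightarrow> m \<le> a"
proof -
  let ?r = "{(a, b). a \<in> A \<and> b \<in> A \<and> a < b}"
  have "trans ?r" unfolding trans_def by (blast intro: less_trans)
  then have "acyclic ?r" unfolding acyclic_def by (simp add: trancl_id)
  moreover have "finite ?r" using assms(1) by (auto intro: finite_subset[of _ "A \<times> A"])
  ultimately have "wf ?r" by (rule finite_acyclic_wf[rotated])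
  moreover obtain a where "a \<in> A" using assms(2) by blast
  ultimately obtain m where m: "m \<in> A" and min: "\<And>b. (b, m) \<in> ?r \<Longrightarrow> b \<notin> A"
    by (rule wfE_min) blast
  show thesis
  proof (rule that[OF m])
    fix a assume "a \<in> A" "a \<le> m"
    show "m \<le> a"
    proof (rule ccontr)
      assume "\<not> m \<le> a"
      with \<open>a \<le> m\<close> have "a < m" by (simp add: less_le_not_le)
      with \<open>a \<in> A\<close> m min show False by blast
    qed
  qed
qed

locale Ex_section =
  fixes sc :: "'k::field \<Rightarrow> 'm::ab_group_add \<Rightarrow> 'm" and V :: "'m set"
    and \<rho> :: "'m \<Rightarrow> 'x::preorder \<times> 'x \<Rightarrow> 'm" and x :: 'x and s :: 'm
  assumes locfin: "\<forall>a b :: 'x. finite {a..b}"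
    and vs: "vector_space sc" and com: "is_comodule sc V \<rho>" and inj: "injective_comodule sc V \<rho>"
    and s_in: "s \<in> V" and s_diag: "\<rho> s (x, x) = s" and s_col: "\<And>a. \<rho> s (a, x) \<noteq> 0 \<Longrightarrow> x \<le> a"
begin

interpretation vs: vector_space sc by (rule vs)

definition partial_section :: "'x set \<Rightarrow> (('x \<times> 'x \<Rightarrow> 'k) \<Rightarrow> 'm) \<Rightarrow> bool" where
  "partial_section D \<psi> \<longleftrightarrow> down_closed_above x D \<and> x \<in> D \<and> D \<subseteq> {x..}
     \<and> comod_hom pscale (Ex_on x D) inc_coact sc V \<rho> \<psi> \<and> \<psi> (basis_vec x x) = s"

text \<open>The colinear map \<open>e\<^sub>x\<^sub>,\<^sub>z \<mapsto> \<rho> s (z, x)\<close> on \<open>Ex_on x {x..x}\<close>, the starting point for Zorn's lemma.\<close>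

definition base_section :: "('x \<times> 'x \<Rightarrow> 'k) \<Rightarrow> 'm" where
  "base_section v = (\<Sum>z\<in>{x..x}. sc (v (x, z)) (\<rho> s (z, x)))"

lemma base_section_coact:
  assumes v: "v \<in> Ex_on x {x..x}" and "a \<le> b"
  shows "\<rho> (base_section v) (a, b) = base_section (inc_coact v (a, b))"
proof -
  have fin: "finite {x..x}" using locfin by blast
  have s_closed: "sc c (\<rho> s (z, x)) \<in> V" for c z
    by (rule comodule_scale[OF com comodule_coact_closed[OF com s_in]])
  have "\<rho> (base_section v) (a, b) = (\<Sum>z\<in>{x..x}. sc (v (x, z)) (\<rho> (\<rho> s (z, x)) (a, b)))"
    unfolding base_section_def comodule_sum(2)[OF com s_closed]
    by (simp add: comodule_coact_scale[OF com comodule_coact_closed[OF com s_in]])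
  also have "\<dots> = (\<Sum>z\<in>{x..x}. if z = b then sc (v (x, b)) (\<rho> s (a, x)) else 0)"
    using comodule_coassoc[OF com s_in \<open>a \<le> b\<close>] by (intro sum.cong) auto
  also have "\<dots> = (if b \<in> {x..x} then sc (v (x, b)) (\<rho> s (a, x)) else 0)"
    using fin by (simp add: sum.delta')
  \<comment> \<open>\<open>s_col\<close> forces \<open>\<rho> s (a, x) = 0\<close> unless \<open>a\<close> is equivalent to \<open>x\<close>\<close>
  also have "\<dots> = (if a \<in> {x..x} then sc (v (x, b)) (\<rho> s (a, x)) else 0)"
    using Ex_onD[OF v, of x b] s_col[of a] \<open>a \<le> b\<close> by (auto intro: order_trans)
  also have "\<dots> = (\<Sum>z\<in>{x..x}. if z = a then sc (v (x, b)) (\<rho> s (a, x)) else 0)"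
    using fin by (simp add: sum.delta')
  also have "\<dots> = base_section (inc_coact v (a, b))"
    unfolding base_section_def using \<open>a \<le> b\<close> by (intro sum.cong) (auto simp: inc_coact_apply)
  finally show ?thesis .
qed

lemma partial_section_base: "partial_section {x..x} base_section"
proof -
  have closed: "base_section v \<in> V" for v
    unfolding base_section_def
    by (intro comodule_sum(1)[OF com] comodule_scale[OF com] comodule_coact_closed[OF com s_in])
  have "comod_hom pscale (Ex_on x {x..x}) inc_coact sc V \<rho> base_section"
  proof (rule comod_homI)
    fix v w :: "'x \<times> 'x \<Rightarrow> 'k"
    show "base_section v \<in> V" by (rule closed)
    show "base_section (v + w) = base_section v + base_section w"
      by (simp add: base_section_def vs.scale_left_distrib sum.distrib)
  next
    fix c and v :: "'x \<times> 'x \<Rightarrow> 'k"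
    show "base_section (pscale c v) = sc c (base_section v)"
      by (simp add: base_section_def pscale_def vs.scale_sum_right)
  next
    fix v :: "'x \<times> 'x \<Rightarrow> 'k" and p assume v: "v \<in> Ex_on x {x..x}"
    obtain a b :: 'x where p: "p = (a, b)" by force
    show "\<rho> (base_section v) p = base_section (inc_coact v p)"
    proof (cases "a \<le> b")
      case False
      then show ?thesis
        using comodule_coact_not_le[OF com closed False]
        by (simp add: p base_section_def inc_coact_def)
    qed (simp add: p base_section_coact[OF v])
  qed
  moreover have "base_section (basis_vec x x) = (\<Sum>z\<in>{x..x}. if z = x then \<rho> s (x, x) else 0)"
    unfolding base_section_def basis_vec_def by (intro sum.cong) auto
  then have "base_section (basis_vec x x) = s"
    using locfin s_diag by (simp add: sum.delta')
  ultimately show ?thesis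
    unfolding partial_section_def by (auto simp: down_closed_above_Icc)
qed

lemma partial_section_extend:
  assumes \<psi>: "partial_section D \<psi>" and "x \<le> y"
  obtains \<psi>' where "partial_section (D \<union> {x..y}) \<psi>'" "\<forall>v\<in>Ex_on x D. \<psi>' v = \<psi> v"
proof -
  have D: "down_closed_above x D" "x \<in> D" "D \<subseteq> {x..}"
    and hom: "comod_hom pscale (Ex_on x D) inc_coact sc V \<rho> \<psi>" and \<psi>_s: "\<psi> (basis_vec x x) = s"
    using \<psi> unfolding partial_section_def by auto
  have F: "down_closed_above x {x..y}" "finite {x..y}"
    using down_closed_above_Icc locfin by blast+
  obtain h where h: "comod_hom pscale (Ex_on x {x..y}) inc_coact sc V \<rho> h"
    and agree: "\<forall>v\<in>Ex_on x (D \<inter> {x..y}). h v = \<psi> v"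
    using injective_comodule_extend_Ex_on_finite[OF locfin inj F(2,1) down_closed_above_Int[OF D(1) F(1)]
        Int_lower2 comod_hom_subset[OF hom Ex_on_mono[OF Int_lower1]]] .
  have "comod_hom pscale (Ex_on x (D \<union> {x..y})) inc_coact sc V \<rho> (glue D \<psi> h)"
    by (rule comod_hom_glue[OF vs com locfin D(1) F(1) hom h agree])
  moreover have ext: "\<forall>v\<in>Ex_on x D. glue D \<psi> h v = \<psi> v"
    using glue_eq_left comod_hom_zero[OF h comodule_zero[OF Ex_on_comodule[OF locfin F(1)]]] by blast
  moreover have "glue D \<psi> h (basis_vec x x) = s"
    using ext basis_vec_in_Ex_on[OF order_refl D(2), where 'k='k] \<psi>_s by simp
  ultimately show thesis
    using that D F(1) \<open>x \<le> y\<close> unfolding partial_section_def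
    by (auto intro: down_closed_above_Un)
qed

definition extends :: "'x set \<Rightarrow> (('x \<times> 'x \<Rightarrow> 'k) \<Rightarrow> 'm) \<Rightarrow> 'x set \<Rightarrow> (('x \<times> 'x \<Rightarrow> 'k) \<Rightarrow> 'm) \<Rightarrow> bool" where
  "extends D' \<psi>' D \<psi> \<longleftrightarrow> D \<subseteq> D' \<and> (\<forall>v\<in>Ex_on x D. \<psi>' v = \<psi> v)"

lemma partial_section_Union:
  assumes "\<P> \<noteq> {}" and sec: "\<And>D \<psi>. (D, \<psi>) \<in> \<P> \<Longrightarrow> partial_section D \<psi>"
    and comparable: "\<And>D \<psi> D' \<psi>'. (D, \<psi>) \<in> \<P> \<Longrightarrow> (D', \<psi>') \<in> \<P> \<Longrightarrow> extends D' \<psi>' D \<psi> \<or> extends D \<psi> D' \<psi>'"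
  obtains \<psi>u where "partial_section (\<Union>(fst ` \<P>)) \<psi>u"
    "\<And>D \<psi> v. (D, \<psi>) \<in> \<P> \<Longrightarrow> v \<in> Ex_on x D \<Longrightarrow> \<psi>u v = \<psi> v"
proof -
  let ?Du = "\<Union>(fst ` \<P>)"
  define \<psi>u where "\<psi>u v = (SOME m. \<exists>(D, \<psi>)\<in>\<P>. v \<in> Ex_on x D \<and> m = \<psi> v)" for v
  have val: "\<psi>u v = \<psi> v" if P: "(D, \<psi>) \<in> \<P>" and v: "v \<in> Ex_on x D" for D \<psi> v
  proof -
    have uniq: "\<psi>' v = \<psi> v" if "(D', \<psi>') \<in> \<P>" "v \<in> Ex_on x D'" for D' \<psi>'
      using comparable[OF P that(1)] that(2) v unfolding extends_def by metis
    show ?thesis unfolding \<psi>u_def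
    proof (rule someI2)
      show "\<exists>(D', \<psi>')\<in>\<P>. v \<in> Ex_on x D' \<and> \<psi> v = \<psi>' v" using P v by blast
      fix m assume "\<exists>(D', \<psi>')\<in>\<P>. v \<in> Ex_on x D' \<and> m = \<psi>' v"
      then show "m = \<psi> v" using uniq by blast
    qed
  qed
  have "subset.chain UNIV (fst ` \<P>)"
    using comparable unfolding subset_chain_def extends_def by fastforce
  then have local: "\<exists>(D, \<psi>)\<in>\<P>. W \<subseteq> Ex_on x D" if W: "finite W" "W \<subseteq> Ex_on x ?Du" for W
  proof -
    obtain D where "D \<in> fst ` \<P>" "W \<subseteq> Ex_on x D"
      using Ex_on_Union_chain[OF _ \<open>subset.chain UNIV (fst ` \<P>)\<close> W] \<open>\<P> \<noteq> {}\<close> by blast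
    then show ?thesis by force
  qed
  have hom: "comod_hom pscale (Ex_on x ?Du) inc_coact sc V \<rho> \<psi>u"
  proof (rule comod_homI)
    fix v w :: "'x \<times> 'x \<Rightarrow> 'k" and c p assume "v \<in> Ex_on x ?Du" "w \<in> Ex_on x ?Du"
    then obtain D \<psi> where P: "(D, \<psi>) \<in> \<P>" and vw: "v \<in> Ex_on x D" "w \<in> Ex_on x D"
      using local[of "{v, w}"] by auto
    have "comod_hom pscale (Ex_on x D) inc_coact sc V \<rho> \<psi>" "is_comodule pscale (Ex_on x D) inc_coact"
      using sec[OF P] Ex_on_comodule[OF locfin] unfolding partial_section_def by auto
    note hom = this(1) and cm = this(2)
    show "\<psi>u v \<in> V" using val[OF P vw(1)] comod_hom_closed[OF hom vw(1)] by simp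
    show "\<psi>u (v + w) = \<psi>u v + \<psi>u w"
      using val[OF P] comodule_add[OF cm vw] comod_hom_add[OF hom vw] vw by simp
    show "\<psi>u (pscale c v) = sc c (\<psi>u v)"
      using val[OF P] comodule_scale[OF cm vw(1)] comod_hom_scale[OF hom vw(1)] vw by simp
    show "\<rho> (\<psi>u v) p = \<psi>u (inc_coact v p)"
      using val[OF P] comodule_coact_closed[OF cm vw(1)] comod_hom_coact[OF hom vw(1)] vw by simp
  qed
  obtain D \<psi> where P: "(D, \<psi>) \<in> \<P>" using \<open>\<P> \<noteq> {}\<close> by auto
  then have "\<psi>u (basis_vec x x) = s"
    using sec[OF P] val[OF P] basis_vec_in_Ex_on[OF order_refl, where 'k='k]
    unfolding partial_section_def by auto
  moreover have "down_closed_above x ?Du"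
    using sec unfolding partial_section_def by (force intro: down_closed_above_Union)
  moreover have "x \<in> ?Du" "?Du \<subseteq> {x..}"
    using sec P unfolding partial_section_def by force+
  ultimately show thesis
    using that hom val unfolding partial_section_def by blast
qed

definition section_graph :: "'x set \<Rightarrow> (('x \<times> 'x \<Rightarrow> 'k) \<Rightarrow> 'm) \<Rightarrow> (('x \<times> 'x \<Rightarrow> 'k) \<times> 'm) set" where
  "section_graph D \<psi> = (\<lambda>v. (v, \<psi> v)) ` Ex_on x D"

definition partial_section_graphs :: "(('x \<times> 'x \<Rightarrow> 'k) \<times> 'm) set set" where
  "partial_section_graphs = {section_graph D \<psi> | D \<psi>. partial_section D \<psi>}"

lemma section_graph_subset_iff:
  assumes "partial_section D \<psi>"
  shows "section_graph D \<psi> \<subseteq> section_graph D' \<psi>' \<longleftrightarrow> extends D' \<psi>' D \<psi>"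
proof
  assume sub: "section_graph D \<psi> \<subseteq> section_graph D' \<psi>'"
  have pt: "v \<in> Ex_on x D' \<and> \<psi>' v = \<psi> v" if "v \<in> Ex_on x D" for v
  proof -
    have "(v, \<psi> v) \<in> section_graph D' \<psi>'"
      using sub that unfolding section_graph_def by blast
    then show ?thesis unfolding section_graph_def by auto
  qed
  have "D \<subseteq> {x..}" using assms unfolding partial_section_def by blast
  moreover have "Ex_on x D \<subseteq> (Ex_on x D' :: ('x \<times> 'x \<Rightarrow> 'k) set)" using pt by blast
  ultimately have "D \<subseteq> D'" by (rule Ex_on_subset_imp_subset)
  with pt show "extends D' \<psi>' D \<psi>" unfolding extends_def by blast
next
  assume ext: "extends D' \<psi>' D \<psi>"
  show "section_graph D \<psi> \<subseteq> section_graph D' \<psi>'"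
  proof
    fix g assume "g \<in> section_graph D \<psi>"
    then obtain v where v: "v \<in> Ex_on x D" "g = (v, \<psi> v)" unfolding section_graph_def by blast
    with ext have "v \<in> Ex_on x D'" "g = (v, \<psi>' v)"
      unfolding extends_def using Ex_on_mono[of D D' x] by auto
    then show "g \<in> section_graph D' \<psi>'" unfolding section_graph_def by blast
  qed
qed

lemma partial_section_graphs_chain:
  assumes "C \<noteq> {}" and chain: "subset.chain partial_section_graphs C"
  shows "\<Union>C \<in> partial_section_graphs"
proof -
  let ?\<P> = "{(D, \<psi>). partial_section D \<psi> \<and> section_graph D \<psi> \<in> C}"
  have C: "\<exists>D \<psi>. partial_section D \<psi> \<and> G = section_graph D \<psi>" if "G \<in> C" for G
    using that chain unfolding subset_chain_def partial_section_graphs_def by blast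
  then have "?\<P> \<noteq> {}" using \<open>C \<noteq> {}\<close> by blast
  moreover have comparable: "extends D' \<psi>' D \<psi> \<or> extends D \<psi> D' \<psi>'" if "(D, \<psi>) \<in> ?\<P>" "(D', \<psi>') \<in> ?\<P>" for D \<psi> D' \<psi>'
  proof -
    have "section_graph D \<psi> \<subseteq> section_graph D' \<psi>' \<or> section_graph D' \<psi>' \<subseteq> section_graph D \<psi>"
      using that chain unfolding subset_chain_def by blast
    then show ?thesis
      using that section_graph_subset_iff[of D \<psi> D' \<psi>'] section_graph_subset_iff[of D' \<psi>' D \<psi>] by auto
  qed
  ultimately obtain \<psi>u where \<psi>u: "partial_section (\<Union>(fst ` ?\<P>)) \<psi>u"
    and val: "\<And>D \<psi> v. (D, \<psi>) \<in> ?\<P> \<Longrightarrow> v \<in> Ex_on x D \<Longrightarrow> \<psi>u v = \<psi> v"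
    using partial_section_Union[of ?\<P>] by blast
  have "\<Union>C = section_graph (\<Union>(fst ` ?\<P>)) \<psi>u"
  proof
    show "\<Union>C \<subseteq> section_graph (\<Union>(fst ` ?\<P>)) \<psi>u"
    proof
      fix g assume "g \<in> \<Union>C"
      then obtain D \<psi> where P: "(D, \<psi>) \<in> ?\<P>" and "g \<in> section_graph D \<psi>" using C by blast
      then obtain v where "v \<in> Ex_on x D" "g = (v, \<psi> v)" unfolding section_graph_def by blast
      moreover have "Ex_on x D \<subseteq> Ex_on x (\<Union>(fst ` ?\<P>))" using P by (intro Ex_on_mono) force
      ultimately show "g \<in> section_graph (\<Union>(fst ` ?\<P>)) \<psi>u"
        using val[OF P] unfolding section_graph_def by auto
    qed
    show "section_graph (\<Union>(fst ` ?\<P>)) \<psi>u \<subseteq> \<Union>C"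
    proof
      fix g assume "g \<in> section_graph (\<Union>(fst ` ?\<P>)) \<psi>u"
      then obtain v where v: "v \<in> Ex_on x (\<Union>(fst ` ?\<P>))" "g = (v, \<psi>u v)"
        unfolding section_graph_def by blast
      have "subset.chain UNIV (fst ` ?\<P>)"
        using comparable unfolding subset_chain_def extends_def by fastforce
      then obtain D where "D \<in> fst ` ?\<P>" "v \<in> Ex_on x D"
        using Ex_on_Union_chain[of "fst ` ?\<P>" "{v}"] v(1) \<open>?\<P> \<noteq> {}\<close> by auto
      then obtain \<psi> where P: "(D, \<psi>) \<in> ?\<P>" by force
      then show "g \<in> \<Union>C"
        using val[OF P \<open>v \<in> Ex_on x D\<close>] \<open>v \<in> Ex_on x D\<close> v(2) unfolding section_graph_def by blast
    qed
  qed
  with \<psi>u show ?thesis unfolding partial_section_graphs_def by blast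
qed

lemma exists_Ex_section:
  obtains \<psi> where "comod_hom pscale (Ex x) inc_coact sc V \<rho> \<psi>" "\<psi> (basis_vec x x) = s"
proof -
  have "partial_section_graphs \<noteq> {}"
    using partial_section_base unfolding partial_section_graphs_def by blast
  then obtain M where "M \<in> partial_section_graphs" and max: "\<forall>G\<in>partial_section_graphs. M \<subseteq> G \<longrightarrow> G = M"
    using subset_Zorn_nonempty[of partial_section_graphs] partial_section_graphs_chain by blast
  then obtain D \<psi> where \<psi>: "partial_section D \<psi>" and M: "M = section_graph D \<psi>"
    unfolding partial_section_graphs_def by blast
  have "{x..} \<subseteq> D"
  proof
    fix y assume "y \<in> {x..}"
    then have "x \<le> y" by simp
    obtain \<psi>' where \<psi>': "partial_section (D \<union> {x..y}) \<psi>'" and "\<forall>v\<in>Ex_on x D. \<psi>' v = \<psi> v"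
      using partial_section_extend[OF \<psi> \<open>x \<le> y\<close>] .
    then have "M \<subseteq> section_graph (D \<union> {x..y}) \<psi>'"
      unfolding M section_graph_subset_iff[OF \<psi>] extends_def by blast
    then have "section_graph (D \<union> {x..y}) \<psi>' = section_graph D \<psi>"
      using max \<psi>' M unfolding partial_section_graphs_def by blast
    then have "extends D \<psi> (D \<union> {x..y}) \<psi>'"
      using section_graph_subset_iff[OF \<psi>'] by blast
    then show "y \<in> D" unfolding extends_def using \<open>x \<le> y\<close> by auto
  qed
  then have "(Ex_on x D :: ('x \<times> 'x \<Rightarrow> 'k) set) = Ex x"
    using \<psi> unfolding partial_section_def Ex_eq_Ex_on_UNIV Ex_on_def by auto
  with \<psi> that show thesis unfolding partial_section_def by auto
qed

end

lemma exists_minimal_row_vector: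
  fixes \<rho> :: "'m::ab_group_add \<Rightarrow> 'x::preorder \<times> 'x \<Rightarrow> 'm"
  assumes com: "is_comodule sc V \<rho>" and "V \<noteq> {0}"
  obtains x s where "s \<in> V" "s \<noteq> 0" "\<rho> s (x, x) = s" "\<And>a. \<rho> s (a, x) \<noteq> 0 \<Longrightarrow> x \<le> a"
proof -
  obtain m where m: "m \<in> V" "m \<noteq> 0" using \<open>V \<noteq> {0}\<close> comodule_zero[OF com] by blast
  let ?R = "fst ` {p. \<rho> m p \<noteq> 0}"
  have "finite ?R" using comodule_coact_finite[OF com m(1)] by blast
  moreover have "{z. \<rho> m (z, z) \<noteq> 0} \<noteq> {}"
    using comodule_counit[OF com m(1)] m(2) by force
  then have "?R \<noteq> {}" by force
  ultimately obtain x where "x \<in> ?R" and min: "\<And>a. a \<in> ?R \<Longrightarrow> a \<le> x \<Longrightarrow> x \<le> a"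
    by (rule finite_has_preorder_minimal) blast
  then obtain b where b: "\<rho> m (x, b) \<noteq> 0" by force
  then have "x \<le> b" using comodule_coact_not_le[OF com m(1)] by blast
  let ?s = "\<rho> m (x, b)"
  have "?s \<in> V" by (rule comodule_coact_closed[OF com m(1)])
  moreover have "?s \<noteq> 0" by (rule b)
  moreover have "\<rho> ?s (x, x) = ?s"
    using comodule_coassoc[OF com m(1) order_refl \<open>x \<le> b\<close>] by simp
  moreover have "x \<le> a" if "\<rho> ?s (a, x) \<noteq> 0" for a
  proof (cases "a \<le> x")
    case True
    then have "\<rho> m (a, b) \<noteq> 0"
      using that comodule_coassoc[OF com m(1) True \<open>x \<le> b\<close>] by simp
    with True min show ?thesis by force
  qed (use that comodule_coact_not_le[OF com \<open>?s \<in> V\<close>] in blast)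
  ultimately show thesis by (rule that)
qed

theorem mainTheorem7:
  fixes sc :: "'k::field \<Rightarrow> 'm::ab_group_add \<Rightarrow> 'm"
    and V :: "'m set"
    and \<rho> :: "'m \<Rightarrow> 'x::preorder \<times> 'x \<Rightarrow> 'm"
  assumes locfin: "\<forall>x y :: 'x. finite {x..y}"
    and vs: "vector_space sc"
    and com: "is_comodule sc V \<rho>"
    and indec: "indecomposable_comodule sc V \<rho>"
    and inj: "injective_comodule sc V \<rho>"
  shows "\<exists>x :: 'x. comod_iso sc V \<rho> pscale (Ex x) inc_coact"
proof -
  have "V \<noteq> {0}" using indec unfolding indecomposable_comodule_def by blast
  then obtain x s where s: "s \<in> V" "s \<noteq> 0" "\<rho> s (x, x) = s" "\<And>a. \<rho> s (a, x) \<noteq> 0 \<Longrightarrow> x \<le> a"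
    by (rule exists_minimal_row_vector[OF com]) blast
  obtain \<mu> :: "'m \<Rightarrow> 'k" where \<mu>: "\<And>a b. \<mu> (a + b) = \<mu> a + \<mu> b" "\<And>c a. \<mu> (sc c a) = c * \<mu> a" "\<mu> s = 1"
    using exists_linear_functional_one[OF vs \<open>s \<noteq> 0\<close>] by blast
  interpret Ex_section sc V \<rho> x s
    by (rule Ex_section.intro) (use locfin vs com inj s in auto)
  obtain \<psi> where \<psi>: "comod_hom pscale (Ex x) inc_coact sc V \<rho> \<psi>" "\<psi> (basis_vec x x) = s"
    by (rule exists_Ex_section)
  let ?\<phi> = "Ex_projection \<mu> \<rho> x"
  have \<phi>: "comod_hom sc V \<rho> pscale (Ex x) inc_coact ?\<phi>"
    by (rule comod_hom_Ex_projection[OF com \<mu>(1,2)])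
  have retr: "?\<phi> (\<psi> w) = w" if "w \<in> Ex x" for w
    using comod_hom_Ex_on_eq_id[of x UNIV "?\<phi> \<circ> \<psi>" w] comod_hom_comp[OF \<psi>(1) \<phi>] that
    by (simp add: Ex_eq_Ex_on_UNIV Ex_projection_apply \<psi>(2) s(3) \<mu>(3))
  have "(basis_vec x x :: 'x \<times> 'x \<Rightarrow> 'k) \<in> Ex x"
    unfolding Ex_eq_Ex_on_UNIV by (rule basis_vec_in_Ex_on) simp_all
  then have "Ex x \<noteq> ({0} :: ('x \<times> 'x \<Rightarrow> 'k) set)"
    using basis_vec_nonzero by force
  then have "comod_iso sc V \<rho> pscale (Ex x) inc_coact"
    by (rule indecomposable_retraction_iso[OF vs com Ex_comodule[OF locfin] indec _ _ \<phi> \<psi>(1) retr])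
      (simp add: pscale_def zero_fun_def)
  then show ?thesis ..
qed

end
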